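(* Fix $m,n$. The following are equivalent. (1) For any triangulations $\mathcal{T},\mathcal{T}'$ of $C(m,n)$, $\mathcal{T}\leqslant_1\mathcal{T}'$ if and only if $\mathcal{T}\leqslant_2\mathcal{T}'$. (2) For any triangulations $\mathcal{T},\mathcal{T}'$ of $C(m,n)$ with $\mathcal{T}<_2\mathcal{T}'$, there exists a triangulation $\mathcal{T}''$ of $C(m,n)$ with $\mathcal{T}\lessdot_1\mathcal{T}''\leqslant_2\mathcal{T}'$. (3) For any triangulations $\mathcal{T},\mathcal{T}'$ of $C(m,n)$ with $\mathcal{T}<_2\mathcal{T}'$, there exists a triangulation $\mathcal{T}''$ of $C(m,n)$ with $\mathcal{T}\leqslant_2\mathcal{T}''\lessdot_1\mathcal{T}'$.
   Context: $C(m,n)$ is the cyclic polytope: the convex hull in $\mathbb{R}^n$ of $p_n(t_i)=(t_i,t_i^2,\dots,t_i^n)$, $i\in[m]$, $t_1<\dots<t_m$. A triangulation is a set of $(n+1)$-subsets of $[m]$ whose geometric simplices form a simplicial complex with union $C(m,n)$. For $U\subseteq[m]$ with $|U|=n+2$, $C(U,n)$ has two triangulations, the lower one (the lower facets of $C(U,n+1)$) and the upper one (the upper facets), where an $n$-subset $F\subseteq U$ is a lower (upper) facet iff each $w\in U\setminus F$ has an even (odd) number of elements of $F$ above it. If $\{S\in\mathcal{T}:S\subseteq U\}$ is the lower triangulation of $C(U,n)$, replacing it by the upper one gives an increasing bistellar flip $\mathcal{T}'$ of $\mathcal{T}$, written $\mathcal{T}\lessdot_1\mathcal{T}'$; $\leqslant_1$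 is the reflexive transitive closure of $\lessdot_1$. Each triangulation $\mathcal{T}$ gives a piecewise-linear map $\sigma_{\mathcal{T}}:C(m,n)\to\mathbb{R}^{n+1}$ mapping each of its simplices affinely with $p_n(t_s)\mapsto p_{n+1}(t_s)$; $\mathcal{T}\leqslant_2\mathcal{T}'$ iff $\sigma_{\mathcal{T}}(z)_{n+1}\leqslant\sigma_{\mathcal{T}'}(z)_{n+1}$ for all $z$, and $<_2$ means $\leqslant_2$ and $\neq$. *)

theory Defs
  imports Complex_Main
begin

text \<open>Points of R^n are represented as functions nat => real, coordinates 1..n
(coordinates outside {1..n} are 0).\<close>

definition moment :: "nat \<Rightarrow> (nat \<Rightarrow> real) \<Rightarrow> nat \<Rightarrow> (nat \<Rightarrow> real)" where
  "moment n t s = (\<lambda>i. if 1 \<le> i \<and> i \<le> n then t s ^ i else 0)"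

definition bary :: "nat \<Rightarrow> (nat \<Rightarrow> real) \<Rightarrow> nat set \<Rightarrow> (nat \<Rightarrow> real) \<Rightarrow> (nat \<Rightarrow> real) \<Rightarrow> bool" where
  "bary n t S l z \<longleftrightarrow> (\<forall>s\<in>S. 0 \<le> l s) \<and> sum l S = 1 \<and>
      z = (\<lambda>i. \<Sum>s\<in>S. l s * moment n t s i)"

definition conv_pts :: "nat \<Rightarrow> (nat \<Rightarrow> real) \<Rightarrow> nat set \<Rightarrow> (nat \<Rightarrow> real) set" where
  "conv_pts n t S = {z. \<exists>l. bary n t S l z}"

definition triangulation :: "nat \<Rightarrow> nat \<Rightarrow> (nat \<Rightarrow> real) \<Rightarrow> nat set set \<Rightarrow> bool" where
  "triangulation m n t T \<longleftrightarrow>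
     (\<forall>S\<in>T. S \<subseteq> {1..m} \<and> card S = n + 1) \<and>
     (\<forall>S\<in>T. \<forall>S'\<in>T. conv_pts n t S \<inter> conv_pts n t S' = conv_pts n t (S \<inter> S')) \<and>
     (\<Union>S\<in>T. conv_pts n t S) = conv_pts n t {1..m}"

text \<open>Lower / upper triangulations of C(U,n) for |U| = n+2 (Gale evenness).\<close>
definition lower_tri :: "nat \<Rightarrow> nat set \<Rightarrow> nat set set" where
  "lower_tri n U = {F. F \<subseteq> U \<and> card F = n + 1 \<and>
      (\<forall>w\<in>U - F. even (card {f\<in>F. w < f}))}"

definition upper_tri :: "nat \<Rightarrow> nat set \<Rightarrow> nat set set" where
  "upper_tri n U = {F. F \<subseteq> U \<and> card F = n + 1 \<and>
      (\<forall>w\<in>U - F. odd (card {f\<in>F. w < f}))}"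

definition flip1 :: "nat \<Rightarrow> nat \<Rightarrow> (nat \<Rightarrow> real) \<Rightarrow> nat set set \<Rightarrow> nat set set \<Rightarrow> bool" where
  "flip1 m n t T T' \<longleftrightarrow> triangulation m n t T \<and> triangulation m n t T' \<and>
     (\<exists>U. U \<subseteq> {1..m} \<and> card U = n + 2 \<and>
          {S\<in>T. S \<subseteq> U} = lower_tri n U \<and>
          T' = (T - lower_tri n U) \<union> upper_tri n U)"

definition leq1 :: "nat \<Rightarrow> nat \<Rightarrow> (nat \<Rightarrow> real) \<Rightarrow> nat set set \<Rightarrow> nat set set \<Rightarrow> bool" where
  "leq1 m n t T T' \<longleftrightarrow> (T = T' \<and> triangulation m n t T) \<or> (flip1 m n t)\<^sup>+\<^sup>+ T T'"

text \<open>Last coordinate of sigma_T(z): on the simplex S of T containing z,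
sigma_T is affine with p_n(t_s) \<mapsto> p_{n+1}(t_s).\<close>
definition sigma_last :: "nat \<Rightarrow> (nat \<Rightarrow> real) \<Rightarrow> nat set set \<Rightarrow> (nat \<Rightarrow> real) \<Rightarrow> real" where
  "sigma_last n t T z = (THE h. \<exists>S\<in>T. \<exists>l. bary n t S l z \<and> h = (\<Sum>s\<in>S. l s * t s ^ (n + 1)))"

definition leq2 :: "nat \<Rightarrow> nat \<Rightarrow> (nat \<Rightarrow> real) \<Rightarrow> nat set set \<Rightarrow> nat set set \<Rightarrow> bool" where
  "leq2 m n t T T' \<longleftrightarrow> (\<forall>z\<in>conv_pts n t {1..m}. sigma_last n t T z \<le> sigma_last n t T' z)"

definition less2 :: "nat \<Rightarrow> nat \<Rightarrow> (nat \<Rightarrow> real) \<Rightarrow> nat set set \<Rightarrow> nat set set \<Rightarrow> bool" where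
  "less2 m n t T T' \<longleftrightarrow> leq2 m n t T T' \<and> T \<noteq> T'"

end

theory Submission
  imports Defs "HOL-Computational_Algebra.Polynomial"
begin

(* Once two geometric facts are known, the three conditions are equivalent for purely
   order-theoretic reasons: an increasing flip raises the height function sigma_T weakly
   everywhere but not identically, and there are only finitely many triangulations. Then (1)
   gives (2) and (3) by taking the first or last flip of a chain, and conversely (2) or (3)
   gives (1) by induction on the number of triangulations above, resp. below, a given one.

   Both geometric facts come from one identity. If U = S \<union> {a} with |S| = n + 1 and a point
   has barycentric weights on S and on some S' inside U, the difference of the weights has
   vanishing moments of order <= n. Pairing it with the monic polynomial prod_{f in S} (x - t_f)
   shows that the heights over S' and over S differ by (weight of a) * prod_{f in S} (t_a - t_f),
   and Gale's evenness condition for S makes this product positive. *)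

section \<open>Moments and Vandermonde-type vanishing\<close>

lemma sum_prod_diff_eq_top_moment:
  fixes \<mu> y :: "'b \<Rightarrow> 'a::idom"
  assumes "finite A" "finite F"
    and low: "\<And>i. i < card F \<Longrightarrow> (\<Sum>s\<in>A. \<mu> s * y s ^ i) = 0"
  shows "(\<Sum>s\<in>A. \<mu> s * (\<Prod>f\<in>F. y s - y f)) = (\<Sum>s\<in>A. \<mu> s * y s ^ card F)"
proof -
  define p where "p = (\<Prod>f\<in>F. [:- y f, 1:])"
  have deg: "degree p = card F"
    unfolding p_def by (subst degree_prod_sum_eq) auto
  have lead: "coeff p (card F) = 1"
    using lead_coeff_prod[of "\<lambda>f. [:- y f, 1:]" F] deg unfolding p_def by simp
  have "(\<Sum>s\<in>A. \<mu> s * (\<Prod>f\<in>F. y s - y f)) = (\<Sum>s\<in>A. \<mu> s * poly p (y s))"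
    by (simp add: p_def poly_prod)
  also have "\<dots> = (\<Sum>i\<le>card F. coeff p i * (\<Sum>s\<in>A. \<mu> s * y s ^ i))"
    by (simp add: poly_altdef deg sum_distrib_left mult_ac sum.swap[of _ A])
  also have "\<dots> = (\<Sum>s\<in>A. \<mu> s * y s ^ card F)"
    using low lead by (simp add: lessThan_Suc_atMost[symmetric])
  finally show ?thesis .
qed

lemma moments_vanish_imp_zero:
  fixes \<mu> y :: "'b \<Rightarrow> 'a::idom"
  assumes inj: "inj_on y A" and "finite A" "card A \<le> n + 1"
    and moments: "\<And>i. i \<le> n \<Longrightarrow> (\<Sum>s\<in>A. \<mu> s * y s ^ i) = 0" and "a \<in> A"
  shows "\<mu> a = 0"
proof -
  define F where "F = A - {a}"
  have F: "finite F" "card F \<le> n" "A = insert a F" "a \<notin> F"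
    using assms by (auto simp: F_def)
  have "\<mu> a * (\<Prod>f\<in>F. y a - y f) = (\<Sum>s\<in>A. \<mu> s * (\<Prod>f\<in>F. y s - y f))"
  proof -
    have "(\<Sum>s\<in>F. \<mu> s * (\<Prod>f\<in>F. y s - y f)) = 0"
      using F(1) by (intro sum.neutral) (auto intro!: prod_zero)
    then show ?thesis
      using F by simp
  qed
  also have "\<dots> = (\<Sum>s\<in>A. \<mu> s * y s ^ card F)"
    by (rule sum_prod_diff_eq_top_moment) (use F \<open>finite A\<close> moments in auto)
  also have "\<dots> = 0"
    using moments F(2) by simp
  finally show ?thesis
    using inj F by (auto simp: inj_on_def)
qed

lemma sum_if_mem_mult:
  fixes f g :: "'a \<Rightarrow> 'b::semiring_0"
  assumes "finite A" "B \<subseteq> A"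
  shows "(\<Sum>s\<in>A. (if s \<in> B then f s else 0) * g s) = (\<Sum>s\<in>B. f s * g s)"
  using assms
  by (simp add: if_distrib[of "\<lambda>x. x * _"] sum.inter_restrict[symmetric] Int_absorb1 cong: if_cong)

lemma bary_finite: "bary n t S l z \<Longrightarrow> finite S"
  unfolding bary_def by (metis sum.infinite zero_neq_one)

lemma bary_moment:
  assumes "bary n t S l z" "i \<le> n"
  shows "(\<Sum>s\<in>S. l s * t s ^ i) = (if i = 0 then 1 else z i)"
  using assms unfolding bary_def moment_def by auto

lemma bary_weights_eq_on_subset:
  assumes inj: "inj_on t A" and "card A \<le> n + 1" and "B \<subseteq> A"
    and A: "bary n t A l z" and B: "bary n t B l' z" and "s \<in> A"
  shows "l s = (if s \<in> B then l' s else 0)"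
proof -
  define \<mu> where "\<mu> s = l s - (if s \<in> B then l' s else 0)" for s
  have "(\<Sum>s\<in>A. \<mu> s * t s ^ i) = 0" if "i \<le> n" for i
  proof -
    have "(\<Sum>s\<in>A. \<mu> s * t s ^ i) = (\<Sum>s\<in>A. l s * t s ^ i) - (\<Sum>s\<in>B. l' s * t s ^ i)"
      using sum_if_mem_mult[OF bary_finite[OF A] \<open>B \<subseteq> A\<close>]
      by (simp add: \<mu>_def left_diff_distrib sum_subtractf)
    then show ?thesis
      using bary_moment[OF A that] bary_moment[OF B that] by simp
  qed
  then have "\<mu> s = 0"
    using moments_vanish_imp_zero[OF inj bary_finite[OF A]] assms by blast
  then show ?thesis
    unfolding \<mu>_def by simp
qed

lemma bary_sum_eq_on_subset:
  assumes "inj_on t A" "card A \<le> n + 1" "B \<subseteq> A" "bary n t A l z" "bary n t B l' z"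
  shows "(\<Sum>s\<in>A. l s * g s) = (\<Sum>s\<in>B. l' s * g s)"
proof -
  have "(\<Sum>s\<in>A. l s * g s) = (\<Sum>s\<in>A. (if s \<in> B then l' s else 0) * g s)"
    using bary_weights_eq_on_subset[OF assms] by (intro sum.cong) auto
  also have "\<dots> = (\<Sum>s\<in>B. l' s * g s)"
    using sum_if_mem_mult[OF bary_finite[OF assms(4)] assms(3)] .
  finally show ?thesis .
qed

lemma bary_subset_eq_if_weights_nonzero:
  assumes "inj_on t A" "card A \<le> n + 1" "B \<subseteq> A" "bary n t A l z" "bary n t B l' z"
    and "\<And>s. s \<in> A \<Longrightarrow> l s \<noteq> 0"
  shows "B = A"
proof -
  have "s \<in> B" if "s \<in> A" for s
    using bary_weights_eq_on_subset[OF assms(1-5) that] assms(6)[OF that] by (auto split: if_splits)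
  with assms(3) show ?thesis
    by blast
qed

lemma bary_restrict:
  assumes "bary n t S l z" "B \<subseteq> S" "\<And>s. s \<in> S - B \<Longrightarrow> l s = 0"
  shows "bary n t B l z"
proof -
  have sum_eq: "sum g S = sum g B" if "\<And>s. s \<in> S - B \<Longrightarrow> g s = 0" for g :: "nat \<Rightarrow> real"
    using sum.mono_neutral_right[OF bary_finite[OF assms(1)] assms(2)] that by blast
  have "(\<lambda>i. \<Sum>s\<in>S. l s * moment n t s i) = (\<lambda>i. \<Sum>s\<in>B. l s * moment n t s i)"
    using assms(3) by (intro ext sum_eq) simp
  then show ?thesis
    using assms sum_eq[of l] unfolding bary_def by auto
qed

section \<open>The height function of a triangulation\<close>

definition lifted_height :: "nat \<Rightarrow> (nat \<Rightarrow> real) \<Rightarrow> nat set \<Rightarrow> (nat \<Rightarrow> real) \<Rightarrow> real" where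
  "lifted_height n t S l = (\<Sum>s\<in>S. l s * t s ^ (n + 1))"

lemma triangulation_simplex:
  assumes "triangulation m n t T" "S \<in> T"
  shows "S \<subseteq> {1..m}" "card S = n + 1"
  using assms unfolding triangulation_def by auto

lemma triangulation_covers:
  assumes "triangulation m n t T" "z \<in> conv_pts n t {1..m}"
  obtains S l where "S \<in> T" "bary n t S l z"
  using assms unfolding triangulation_def conv_pts_def by blast

lemma triangulation_bary_in_cover:
  assumes "triangulation m n t T" "S \<in> T" "bary n t S l z"
  shows "z \<in> conv_pts n t {1..m}"
  using assms unfolding triangulation_def conv_pts_def by blast

lemma triangulation_bary_meet:
  assumes "triangulation m n t T" "S \<in> T" "S' \<in> T" "bary n t S l z" "bary n t S' l' z"
  obtains l'' where "bary n t (S \<inter> S') l'' z"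
proof -
  have "z \<in> conv_pts n t S \<inter> conv_pts n t S'"
    using assms(4,5) unfolding conv_pts_def by blast
  also have "\<dots> = conv_pts n t (S \<inter> S')"
    using assms(1-3) unfolding triangulation_def by blast
  finally show ?thesis
    using that unfolding conv_pts_def by blast
qed

lemma sigma_last_eq:
  assumes mono: "strict_mono_on {1..m} t" and T: "triangulation m n t T"
    and S: "S \<in> T" "bary n t S l z"
  shows "sigma_last n t T z = lifted_height n t S l"
proof -
  have inj: "inj_on t {1..m}"
    using mono by (rule strict_mono_on_imp_inj_on)
  have "lifted_height n t S' l' = lifted_height n t S l" if S': "S' \<in> T" "bary n t S' l' z" for S' l'
  proof -
    obtain l'' where meet: "bary n t (S \<inter> S') l'' z"
      using triangulation_bary_meet[OF T S(1) S'(1) S(2) S'(2)] .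
    have "lifted_height n t X k = lifted_height n t (S \<inter> S') l''"
      if "X \<in> T" "S \<inter> S' \<subseteq> X" "bary n t X k z" for X k
      unfolding lifted_height_def
      using bary_sum_eq_on_subset[OF inj_on_subset[OF inj] _ _ that(3) meet]
        triangulation_simplex[OF T that(1)] that(2) by simp
    from this[of S l] this[of S' l'] show ?thesis
      using S S' by (metis Int_lower1 Int_lower2)
  qed
  then show ?thesis
    unfolding sigma_last_def lifted_height_def[symmetric] using S by (intro the_equality) blast+
qed

section \<open>Increasing flips\<close>

lemma card_Suc_subset_obtains_insert:
  assumes "finite U" "F \<subseteq> U" "card U = Suc (card F)"
  obtains a where "a \<notin> F" "U = insert a F"
proof -
  have "card (U - F) = 1"
    using assms by (simp add: card_Diff_subset finite_subset)
  then obtain a where "U - F = {a}"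
    by (rule card_1_singletonE)
  then show ?thesis
    using that assms(2) by blast
qed

lemma lower_tri_obtains_insert:
  assumes "S \<in> lower_tri n U" "card U = n + 2"
  obtains a where "a \<notin> S" "U = insert a S" "even (card {f\<in>S. a < f})"
proof -
  have S: "S \<subseteq> U" "card S = n + 1"
    using assms(1) unfolding lower_tri_def by auto
  have "finite U"
    using assms(2) by (intro card_ge_0_finite) simp
  obtain a where "a \<notin> S" "U = insert a S"
    by (rule card_Suc_subset_obtains_insert[OF \<open>finite U\<close> S(1)]) (simp add: S(2) assms(2))
  with assms(1) show ?thesis
    using that unfolding lower_tri_def by blast
qed

lemma lower_tri_disjoint_upper_tri:
  assumes "card U = n + 2"
  shows "lower_tri n U \<inter> upper_tri n U = {}"
proof -
  have "False" if lower: "S \<in> lower_tri n U" and upper: "S \<in> upper_tri n U" for S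
  proof -
    obtain a where "a \<notin> S" "U = insert a S" "even (card {f\<in>S. a < f})"
      using lower_tri_obtains_insert[OF lower assms] .
    then show False
      using upper unfolding upper_tri_def by auto
  qed
  then show ?thesis
    by blast
qed

lemma Diff_Max_in_lower_tri:
  assumes "card U = n + 2"
  shows "U - {Max U} \<in> lower_tri n U"
proof -
  have "finite U" "U \<noteq> {}"
    using assms by (auto intro: card_ge_0_finite)
  then have "Max U \<in> U"
    by simp
  have "even (card {f \<in> U - {Max U}. w < f})" if "w \<in> U - (U - {Max U})" for w
  proof -
    have "{f \<in> U - {Max U}. w < f} = {}"
      using that \<open>finite U\<close> by (auto simp: not_less)
    then show ?thesis
      by (simp only: card.empty even_zero)
  qed
  moreover have "card (U - {Max U}) = n + 1"
    using \<open>Max U \<in> U\<close> assms by simp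
  ultimately show ?thesis
    unfolding lower_tri_def by blast
qed

lemma prod_diff_pos_if_even_above:
  fixes t :: "'a::linorder \<Rightarrow> 'b::linordered_idom"
  assumes mono: "strict_mono_on (insert a S) t" and "finite S" "a \<notin> S"
    and even: "even (card {f\<in>S. a < f})"
  shows "0 < (\<Prod>f\<in>S. t a - t f)"
proof -
  let ?below = "{f\<in>S. f < a}" and ?above = "{f\<in>S. a < f}"
  have t_less: "t f < t g" if "f \<in> insert a S" "g \<in> insert a S" "f < g" for f g
    using strict_mono_onD[OF mono that] .
  have below: "0 < (\<Prod>f\<in>?below. t a - t f)" and above: "0 < (\<Prod>f\<in>?above. t f - t a)"
    using t_less by (auto intro!: prod_pos)
  have "(\<Prod>f\<in>S. t a - t f) = (\<Prod>f\<in>?below. t a - t f) * (\<Prod>f\<in>?above. t a - t f)"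
    using \<open>finite S\<close> \<open>a \<notin> S\<close>
    by (subst prod.union_disjoint[symmetric]) (auto intro!: prod.cong dest: not_less_iff_gr_or_eq[THEN iffD1])
  also have "(\<Prod>f\<in>?above. t a - t f) = (\<Prod>f\<in>?above. (-1) * (t f - t a))"
    by simp
  also have "\<dots> = (-1) ^ card ?above * (\<Prod>f\<in>?above. t f - t a)"
    by (subst prod.distrib) (simp only: prod_constant)
  also have "\<dots> = (\<Prod>f\<in>?above. t f - t a)"
    using even by simp
  finally show ?thesis
    using mult_pos_pos[OF below above] by (simp only:)
qed

lemma lifted_height_diff:
  assumes "a \<notin> S" "card S = n + 1" "S' \<subseteq> insert a S"
    and S: "bary n t S l z" and S': "bary n t S' l' z"
  shows "lifted_height n t S' l' - lifted_height n t S l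
           = (if a \<in> S' then l' a else 0) * (\<Prod>f\<in>S. t a - t f)"
proof -
  let ?U = "insert a S"
  have "finite S" "finite ?U"
    using bary_finite[OF S] by simp_all
  define \<mu> where "\<mu> s = (if s \<in> S' then l' s else 0) - (if s \<in> S then l s else 0)" for s
  have moment: "(\<Sum>s\<in>?U. \<mu> s * t s ^ i) = (\<Sum>s\<in>S'. l' s * t s ^ i) - (\<Sum>s\<in>S. l s * t s ^ i)" for i
  proof -
    have "(\<Sum>s\<in>?U. \<mu> s * t s ^ i) = (\<Sum>s\<in>?U. (if s \<in> S' then l' s else 0) * t s ^ i)
        - (\<Sum>s\<in>?U. (if s \<in> S then l s else 0) * t s ^ i)"
      by (simp add: \<mu>_def left_diff_distrib sum_subtractf)
    then show ?thesis
      using sum_if_mem_mult[OF \<open>finite ?U\<close> \<open>S' \<subseteq> ?U\<close>, of l' "\<lambda>s. t s ^ i"]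
        sum_if_mem_mult[OF \<open>finite ?U\<close> subset_insertI[of S a], of l "\<lambda>s. t s ^ i"] by simp
  qed
  have "\<mu> a * (\<Prod>f\<in>S. t a - t f) = (\<Sum>s\<in>?U. \<mu> s * (\<Prod>f\<in>S. t s - t f))"
  proof -
    have "(\<Sum>s\<in>S. \<mu> s * (\<Prod>f\<in>S. t s - t f)) = 0"
      using \<open>finite S\<close> by (intro sum.neutral) (auto intro!: prod_zero)
    then show ?thesis
      using \<open>finite S\<close> \<open>a \<notin> S\<close> by simp
  qed
  also have "\<dots> = (\<Sum>s\<in>?U. \<mu> s * t s ^ card S)"
    by (rule sum_prod_diff_eq_top_moment)
      (use \<open>finite S\<close> moment bary_moment[OF S] bary_moment[OF S'] \<open>card S = n + 1\<close> in auto)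
  also have "\<dots> = lifted_height n t S' l' - lifted_height n t S l"
    unfolding moment lifted_height_def \<open>card S = n + 1\<close> ..
  finally show ?thesis
    using \<open>a \<notin> S\<close> by (simp add: \<mu>_def)
qed

lemma lower_tri_height_gap:
  assumes mono: "strict_mono_on U t" and "card U = n + 2" "S \<in> lower_tri n U" "S' \<subseteq> U"
    and "bary n t S l z" "bary n t S' l' z"
  obtains a c where "a \<in> U - S" "0 < c"
    "lifted_height n t S' l' - lifted_height n t S l = (if a \<in> S' then l' a else 0) * c"
proof -
  obtain a where a: "a \<notin> S" "U = insert a S" "even (card {f\<in>S. a < f})"
    using lower_tri_obtains_insert[OF assms(3,2)] .
  have "card S = n + 1"
    using assms(3) unfolding lower_tri_def by blast
  show ?thesis
  proof
    show "a \<in> U - S"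
      using a by blast
    show "0 < (\<Prod>f\<in>S. t a - t f)"
      using prod_diff_pos_if_even_above[of a S t] mono a bary_finite[OF assms(5)] by simp
    show "lifted_height n t S' l' - lifted_height n t S l = (if a \<in> S' then l' a else 0) * (\<Prod>f\<in>S. t a - t f)"
      using lifted_height_diff[OF \<open>a \<notin> S\<close> \<open>card S = n + 1\<close> _ assms(5,6)] a(2) assms(4) by simp
  qed
qed

lemma lower_tri_bary_Int_if_height_le:
  assumes "strict_mono_on U t" "card U = n + 2" "S \<in> lower_tri n U" "S' \<subseteq> U"
    and S: "bary n t S l z" and S': "bary n t S' l' z"
    and le: "lifted_height n t S' l' \<le> lifted_height n t S l"
  shows "bary n t (S \<inter> S') l' z"
proof -
  obtain a c where a: "a \<in> U - S" and "0 < c"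
    and gap: "lifted_height n t S' l' - lifted_height n t S l = (if a \<in> S' then l' a else 0) * c"
    using lower_tri_height_gap[OF assms(1-4) S S'] by blast
  have "(if a \<in> S' then l' a else 0) * c \<le> 0"
    using gap le by linarith
  then have "a \<in> S' \<Longrightarrow> l' a = 0"
    using \<open>0 < c\<close> S' unfolding bary_def by (auto simp: mult_le_0_iff)
  moreover have "S' - S \<subseteq> {a}"
    using \<open>S' \<subseteq> U\<close> a lower_tri_obtains_insert[OF assms(3,2)] by blast
  ultimately show ?thesis
    by (intro bary_restrict[OF S']) auto
qed

lemma flip1_imp_leq2:
  assumes mono: "strict_mono_on {1..m} t" and "flip1 m n t T T'"
  shows "leq2 m n t T T'"
  unfolding leq2_def
proof
  fix z assume z: "z \<in> conv_pts n t {1..m}"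
  obtain U where T: "triangulation m n t T" and T': "triangulation m n t T'"
    and U: "U \<subseteq> {1..m}" "card U = n + 2" and T'_eq: "T' = (T - lower_tri n U) \<union> upper_tri n U"
    using assms(2) unfolding flip1_def by blast
  obtain S l where S: "S \<in> T" "bary n t S l z"
    using triangulation_covers[OF T z] .
  obtain S' l' where S': "S' \<in> T'" "bary n t S' l' z"
    using triangulation_covers[OF T' z] .
  consider "S' \<in> T" | "S \<in> T'" | "S \<in> lower_tri n U" "S' \<in> upper_tri n U"
    using S(1) S'(1) T'_eq by blast
  then show "sigma_last n t T z \<le> sigma_last n t T' z"
  proof cases
    case 1
    then show ?thesis
      using sigma_last_eq[OF mono T 1 S'(2)] sigma_last_eq[OF mono T' S'] by simp
  next
    case 2
    then show ?thesis
      using sigma_last_eq[OF mono T S] sigma_last_eq[OF mono T' 2 S(2)] by simp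
  next
    case 3
    have "S' \<subseteq> U"
      using 3(2) unfolding upper_tri_def by blast
    then obtain a c where "0 < c"
      and gap: "lifted_height n t S' l' - lifted_height n t S l = (if a \<in> S' then l' a else 0) * c"
      using lower_tri_height_gap[OF monotone_on_subset[OF mono U(1)] U(2) 3(1) _ S(2) S'(2)] by blast
    moreover have "0 \<le> (if a \<in> S' then l' a else 0)"
      using S'(2) unfolding bary_def by simp
    ultimately have "lifted_height n t S l \<le> lifted_height n t S' l'"
      by (simp add: algebra_simps)
    then show ?thesis
      using sigma_last_eq[OF mono T S] sigma_last_eq[OF mono T' S'] by simp
  qed
qed

(* The witness is the barycentre of the lower facet U - {Max U}, which the flip removes. A simplex
   of T' carrying it at no greater height shares with that facet a face containing it, and this
   face is the whole facet because all barycentric weights are positive. *)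

lemma flip1_not_leq2_converse:
  assumes mono: "strict_mono_on {1..m} t" and "flip1 m n t T T'"
  shows "\<not> leq2 m n t T' T"
proof
  assume reverse: "leq2 m n t T' T"
  obtain U where T: "triangulation m n t T" and T': "triangulation m n t T'"
    and U: "U \<subseteq> {1..m}" "card U = n + 2" and lower: "{S\<in>T. S \<subseteq> U} = lower_tri n U"
    and T'_eq: "T' = (T - lower_tri n U) \<union> upper_tri n U"
    using assms(2) unfolding flip1_def by blast
  define F where "F = U - {Max U}"
  have F_lower: "F \<in> lower_tri n U"
    unfolding F_def using Diff_Max_in_lower_tri[OF U(2)] .
  then have "F \<in> T" "F \<notin> T'"
    using lower T'_eq lower_tri_disjoint_upper_tri[OF U(2)] by blast+
  have "card F = n + 1"
    using F_lower unfolding lower_tri_def by blast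
  define l :: "nat \<Rightarrow> real" where "l = (\<lambda>_. 1 / real (n + 1))"
  define z where "z = (\<lambda>i. \<Sum>s\<in>F. l s * moment n t s i)"
  have F_bary: "bary n t F l z"
    unfolding bary_def z_def l_def using \<open>card F = n + 1\<close> by simp
  obtain S' l' where S': "S' \<in> T'" "bary n t S' l' z"
    using triangulation_covers[OF T' triangulation_bary_in_cover[OF T \<open>F \<in> T\<close> F_bary]] .
  obtain l'' where "bary n t (F \<inter> S') l'' z"
  proof (cases "S' \<in> T")
    case True
    then show thesis
      using triangulation_bary_meet[OF T \<open>F \<in> T\<close> True F_bary S'(2)] that by blast
  next
    case False
    then have "S' \<subseteq> U"
      using S'(1) T'_eq unfolding upper_tri_def by blast
    moreover have "lifted_height n t S' l' \<le> lifted_height n t F l"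
      using reverse triangulation_bary_in_cover[OF T \<open>F \<in> T\<close> F_bary] unfolding leq2_def
      using sigma_last_eq[OF mono T \<open>F \<in> T\<close> F_bary] sigma_last_eq[OF mono T' S'] by metis
    ultimately have "bary n t (F \<inter> S') l' z"
      using lower_tri_bary_Int_if_height_le[OF monotone_on_subset[OF mono U(1)] U(2) F_lower _ F_bary S'(2)]
      by blast
    then show thesis
      using that by blast
  qed
  moreover have "inj_on t F"
    using strict_mono_on_imp_inj_on[OF mono] triangulation_simplex(1)[OF T \<open>F \<in> T\<close>]
    by (rule inj_on_subset)
  ultimately have "F \<inter> S' = F"
    by (intro bary_subset_eq_if_weights_nonzero[OF _ _ _ F_bary]) (simp_all add: \<open>card F = n + 1\<close> l_def)
  then have "F = S'"
    using card_subset_eq[OF bary_finite[OF S'(2)]] triangulation_simplex[OF T' S'(1)] \<open>card F = n + 1\<close>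
    by (metis Int_lower2)
  with \<open>F \<notin> T'\<close> S'(1) show False
    by simp
qed

section \<open>From flips to the three conditions\<close>

lemma rtranclp_eq_iff_first_step_below:
  assumes "finite A"
    and le_refl: "\<And>x. le x x"
    and le_trans: "\<And>x y z. le x y \<Longrightarrow> le y z \<Longrightarrow> le x z"
    and step_closed: "\<And>x y. r x y \<Longrightarrow> x \<in> A \<and> y \<in> A"
    and step_le: "\<And>x y. r x y \<Longrightarrow> le x y"
    and step_strict: "\<And>x y. r x y \<Longrightarrow> \<not> le y x"
  shows "(\<forall>x\<in>A. \<forall>y\<in>A. r\<^sup>*\<^sup>* x y \<longleftrightarrow> le x y) \<longleftrightarrow>
         (\<forall>x\<in>A. \<forall>y\<in>A. le x y \<and> x \<noteq> y \<longrightarrow> (\<exists>z\<in>A. r x z \<and> le z y))"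
proof
  assume eq: "\<forall>x\<in>A. \<forall>y\<in>A. r\<^sup>*\<^sup>* x y \<longleftrightarrow> le x y"
  show "\<forall>x\<in>A. \<forall>y\<in>A. le x y \<and> x \<noteq> y \<longrightarrow> (\<exists>z\<in>A. r x z \<and> le z y)"
  proof (intro ballI impI)
    fix x y assume "x \<in> A" "y \<in> A" "le x y \<and> x \<noteq> y"
    then have "r\<^sup>*\<^sup>* x y" "x \<noteq> y"
      using eq by auto
    then obtain z where "r x z" "r\<^sup>*\<^sup>* z y"
      by (auto elim: converse_rtranclpE)
    then show "\<exists>z\<in>A. r x z \<and> le z y"
      using eq step_closed \<open>y \<in> A\<close> by blast
  qed
next
  assume below: "\<forall>x\<in>A. \<forall>y\<in>A. le x y \<and> x \<noteq> y \<longrightarrow> (\<exists>z\<in>A. r x z \<and> le z y)"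
  have "le x y" if "r\<^sup>*\<^sup>* x y" for x y
    using that by (induction rule: rtranclp_induct) (auto intro: le_refl le_trans step_le)
  moreover have "r\<^sup>*\<^sup>* x y" if "x \<in> A" "y \<in> A" "le x y" for x y
    using that
  proof (induction "card {w\<in>A. le x w}" arbitrary: x rule: less_induct)
    case less
    show ?case
    proof (cases "x = y")
      case False
      then obtain z where z: "z \<in> A" "r x z" "le z y"
        using below less.prems by blast
      have "{w\<in>A. le z w} \<subset> {w\<in>A. le x w}"
        using step_le[OF z(2)] step_strict[OF z(2)] le_trans le_refl \<open>x \<in> A\<close> by blast
      then have "r\<^sup>*\<^sup>* z y"
        using less.hyps[OF psubset_card_mono] \<open>finite A\<close> z less.prems(2) by auto
      with z(2) show ?thesis
        by (rule converse_rtranclp_into_rtranclp)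
    qed simp
  qed
  ultimately show "\<forall>x\<in>A. \<forall>y\<in>A. r\<^sup>*\<^sup>* x y \<longleftrightarrow> le x y"
    by blast
qed

lemma finite_triangulations: "finite {T. triangulation m n t T}"
proof (rule finite_subset)
  show "{T. triangulation m n t T} \<subseteq> Pow (Pow {1..m})"
    using triangulation_simplex(1) by blast
qed simp

lemma leq1_iff_rtranclp: "leq1 m n t T T' \<longleftrightarrow> triangulation m n t T \<and> (flip1 m n t)\<^sup>*\<^sup>* T T'"
  unfolding leq1_def
  by (auto dest: rtranclpD tranclpD tranclp_into_rtranclp simp: flip1_def)

theorem lemma3p3:
  fixes m n :: nat and t :: "nat \<Rightarrow> real"
  assumes "strict_mono_on {1..m} t"
  defines "P1 \<equiv> (\<forall>T T'. triangulation m n t T \<longrightarrow> triangulation m n t T' \<longrightarrow>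
                     (leq1 m n t T T' \<longleftrightarrow> leq2 m n t T T'))"
      and "P2 \<equiv> (\<forall>T T'. triangulation m n t T \<longrightarrow> triangulation m n t T' \<longrightarrow> less2 m n t T T' \<longrightarrow>
                     (\<exists>T''. triangulation m n t T'' \<and> flip1 m n t T T'' \<and> leq2 m n t T'' T'))"
      and "P3 \<equiv> (\<forall>T T'. triangulation m n t T \<longrightarrow> triangulation m n t T' \<longrightarrow> less2 m n t T T' \<longrightarrow>
                     (\<exists>T''. triangulation m n t T'' \<and> leq2 m n t T T'' \<and> flip1 m n t T'' T'))"
  shows "(P1 \<longleftrightarrow> P2) \<and> (P2 \<longleftrightarrow> P3)"
proof -
  let ?A = "{T. triangulation m n t T}" and ?r = "flip1 m n t" and ?le = "leq2 m n t"
  have flips: "\<And>x y. ?r x y \<Longrightarrow> x \<in> ?A \<and> y \<in> ?A" "\<And>x y. ?r x y \<Longrightarrow> ?le x y"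
    "\<And>x y. ?r x y \<Longrightarrow> \<not> ?le y x"
    using flip1_imp_leq2[OF assms(1)] flip1_not_leq2_converse[OF assms(1)] by (auto simp: flip1_def)
  have le: "\<And>x. ?le x x" "\<And>x y z. ?le x y \<Longrightarrow> ?le y z \<Longrightarrow> ?le x z"
    unfolding leq2_def by (auto intro: order_trans)
  have "P1 \<longleftrightarrow> (\<forall>x\<in>?A. \<forall>y\<in>?A. ?r\<^sup>*\<^sup>* x y \<longleftrightarrow> ?le x y)"
    unfolding P1_def leq1_iff_rtranclp by auto
  also have "\<dots> \<longleftrightarrow> (\<forall>x\<in>?A. \<forall>y\<in>?A. ?le x y \<and> x \<noteq> y \<longrightarrow> (\<exists>z\<in>?A. ?r x z \<and> ?le z y))"
    by (rule rtranclp_eq_iff_first_step_below) (use finite_triangulations le flips in auto)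
  also have "\<dots> \<longleftrightarrow> P2"
    unfolding P2_def less2_def by blast
  finally have "P1 \<longleftrightarrow> P2" .
  have "P1 \<longleftrightarrow> (\<forall>x\<in>?A. \<forall>y\<in>?A. ?r\<inverse>\<inverse>\<^sup>*\<^sup>* x y \<longleftrightarrow> ?le\<inverse>\<inverse> x y)"
    unfolding P1_def leq1_iff_rtranclp rtranclp_conversep by auto
  also have "\<dots> \<longleftrightarrow> (\<forall>x\<in>?A. \<forall>y\<in>?A. ?le\<inverse>\<inverse> x y \<and> x \<noteq> y \<longrightarrow> (\<exists>z\<in>?A. ?r\<inverse>\<inverse> x z \<and> ?le\<inverse>\<inverse> z y))"
    by (rule rtranclp_eq_iff_first_step_below) (use finite_triangulations le flips in auto)
  also have "\<dots> \<longleftrightarrow> P3"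
    unfolding P3_def less2_def by auto
  finally show ?thesis
    using \<open>P1 \<longleftrightarrow> P2\<close> by blast
qed

end
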